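(* Let $N\geq 3$ and let $\Omega\subset\mathbb{R}^N$ be a smooth bounded domain. Let $p\in C^{0,\alpha}(\overline{\Omega})$ (for some $0<\alpha<1$) be non-negative, and let $f:[0,\infty)\to[0,\infty)$ be a non-decreasing function with $f\in C^{0,\alpha}_{\rm loc}[0,\infty)$, $f(0)=0$, $f>0$ on $(0,\infty)$, and $\Lambda:=\sup_{s\geq 1} f(s)/s<\infty$. Then the problem $$\Delta u+|\nabla u|=p(x)f(u)\ \text{ in }\Omega,\qquad u\geq 0\ \text{ in }\Omega,$$ has no positive large solution in $\Omega$, i.e. there is no positive (classical) solution $u$ with $u(x)\to\infty$ as $\operatorname{dist}(x,\partial\Omega)\to 0$.
   Context: A large (explosive, blow-up) solution of the problem in a bounded domain $\Omega$ is a solution $u$ with $u(x)\to\infty$ as $\operatorname{dist}(x,\partial\Omega)\to0$. *)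

theory Defs
  imports "HOL-Analysis.Analysis"
begin

definition partial :: "'n::finite \<Rightarrow> (real^'n \<Rightarrow> real) \<Rightarrow> real^'n \<Rightarrow> real" where
  "partial i g x = deriv (\<lambda>t. g (x + t *\<^sub>R axis i 1)) 0"

definition iter_partial :: "'n::finite list \<Rightarrow> (real^'n \<Rightarrow> real) \<Rightarrow> real^'n \<Rightarrow> real" where
  "iter_partial is g = foldr partial is g"

text \<open>C-infinity on an open set: all iterated partial derivatives are (Frechet)
  differentiable, hence continuous, on S.\<close>
definition smooth_on :: "(real^'n::finite) set \<Rightarrow> (real^'n \<Rightarrow> real) \<Rightarrow> bool" where
  "smooth_on S g \<longleftrightarrow> (\<forall>is. \<forall>x\<in>S. iter_partial is g differentiable (at x))"

definition grad :: "(real^'n::finite \<Rightarrow> real) \<Rightarrow> real^'n \<Rightarrow> real^'n" where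
  "grad g x = (\<chi> i. partial i g x)"

definition laplacian :: "(real^'n::finite \<Rightarrow> real) \<Rightarrow> real^'n \<Rightarrow> real" where
  "laplacian g x = (\<Sum>i\<in>UNIV. partial i (partial i g) x)"

definition C2_on :: "(real^'n::finite) set \<Rightarrow> (real^'n \<Rightarrow> real) \<Rightarrow> bool" where
  "C2_on S u \<longleftrightarrow> (\<forall>x\<in>S. u differentiable (at x)) \<and>
     (\<forall>i. \<forall>x\<in>S. partial i u differentiable (at x)) \<and>
     (\<forall>i j. continuous_on S (partial j (partial i u)))"

text \<open>Smooth bounded domain: nonempty bounded connected open set with C-infinity
  boundary, given by a global smooth defining function phi:
  Omega = {phi < 0}, boundary = {phi = 0}, grad phi nonzero on the boundary.\<close>
definition smooth_bounded_domain :: "(real^'n::finite) set \<Rightarrow> bool" where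
  "smooth_bounded_domain \<Omega> \<longleftrightarrow> open \<Omega> \<and> connected \<Omega> \<and> bounded \<Omega> \<and> \<Omega> \<noteq> {} \<and>
     (\<exists>\<phi>. smooth_on UNIV \<phi> \<and> \<Omega> = {x. \<phi> x < 0} \<and> frontier \<Omega> = {x. \<phi> x = 0} \<and>
          (\<forall>x\<in>frontier \<Omega>. grad \<phi> x \<noteq> 0))"

definition holder_on :: "real \<Rightarrow> ('a::metric_space) set \<Rightarrow> ('a \<Rightarrow> real) \<Rightarrow> bool" where
  "holder_on \<alpha> S g \<longleftrightarrow> (\<exists>C. \<forall>x\<in>S. \<forall>y\<in>S. \<bar>g x - g y\<bar> \<le> C * dist x y powr \<alpha>)"

definition loc_holder_nonneg :: "real \<Rightarrow> (real \<Rightarrow> real) \<Rightarrow> bool" where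
  "loc_holder_nonneg \<alpha> g \<longleftrightarrow> (\<forall>b\<ge>0. holder_on \<alpha> {0..b} g)"

definition large_at_boundary :: "(real^'n::finite) set \<Rightarrow> (real^'n \<Rightarrow> real) \<Rightarrow> bool" where
  "large_at_boundary \<Omega> u \<longleftrightarrow>
     (\<forall>M. \<exists>\<delta>>0. \<forall>x\<in>\<Omega>. infdist x (frontier \<Omega>) < \<delta> \<longrightarrow> u x > M)"

end

theory Submission
  imports Defs
begin

(* The equation gives the differential inequality \<Delta>u \<le> K u + C with K > 0, since |\<nabla>u| \<ge> 0,
   p is bounded and f grows at most linearly. The function \<psi>(x) = exp (sqrt K * x_k) satisfies
   \<Delta>\<psi> = K \<psi>. For every a \<ge> 0 the difference u - a \<psi> still blows up at the boundary, so it
   attains an interior minimum, where \<Delta>(a \<psi>) \<le> \<Delta>u; this yields u - a \<psi> \<ge> -C/K on all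
   of \<Omega>, which is absurd for large a. Only the continuity of p and the nonnegativity,
   monotonicity and linear growth of f enter. *)

lemma local_min_second_deriv_nonneg:
  fixes g g' :: "real \<Rightarrow> real"
  assumes "e > 0"
    and g: "\<And>t. \<bar>t\<bar> < e \<Longrightarrow> (g has_real_derivative g' t) (at t)"
    and g': "(g' has_real_derivative d) (at 0)"
    and min: "\<And>t. \<bar>t\<bar> < e \<Longrightarrow> g 0 \<le> g t"
  shows "0 \<le> d"
proof (rule ccontr)
  assume "\<not> 0 \<le> d"
  have "g' 0 = 0"
    using DERIV_local_min[OF g[of 0] \<open>e > 0\<close>] min \<open>e > 0\<close> by (auto simp: abs_minus_commute)
  obtain \<delta> where "\<delta> > 0" and g'_neg: "\<And>h. 0 < h \<Longrightarrow> h < \<delta> \<Longrightarrow> g' h < 0"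
    using DERIV_neg_dec_right[OF g'] \<open>\<not> 0 \<le> d\<close> \<open>g' 0 = 0\<close> by force
  define t where "t = min \<delta> e / 2"
  have t: "0 < t" "t < \<delta>" "t < e" using \<open>\<delta> > 0\<close> \<open>e > 0\<close> by (auto simp: t_def)
  obtain z where "0 < z" "z < t" "g t - g 0 = t * g' z"
    using MVT2[of 0 t g g'] g t by auto
  moreover have "g' z < 0" using g'_neg \<open>0 < z\<close> \<open>z < t\<close> t by simp
  ultimately have "g t < g 0" using mult_pos_neg[of t "g' z"] t by linarith
  with min[of t] t show False by simp
qed

lemma has_real_derivative_along_axis:
  fixes g :: "real^'n::finite \<Rightarrow> real"
  assumes "g differentiable (at (x + t *\<^sub>R axis i 1))"
  shows "((\<lambda>s. g (x + s *\<^sub>R axis i 1)) has_real_derivative partial i g (x + t *\<^sub>R axis i 1)) (at t)"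
proof -
  obtain D where D: "(g has_derivative D) (at (x + t *\<^sub>R axis i 1))"
    using assms by (auto simp: differentiable_def)
  have line: "((\<lambda>s. g (z + s *\<^sub>R axis i 1)) has_real_derivative D (axis i 1)) (at r)"
    if "z + r *\<^sub>R axis i 1 = x + t *\<^sub>R axis i 1" for z r
  proof -
    have "((\<lambda>s. g (z + s *\<^sub>R axis i 1)) has_derivative (\<lambda>h. D (h *\<^sub>R axis i 1))) (at r)"
      by (rule has_derivative_compose[of "\<lambda>s. z + s *\<^sub>R axis i 1" _ r UNIV g, OF _ D[folded that],
          simplified]) (auto intro!: derivative_eq_intros)
    moreover have "(\<lambda>h. D (h *\<^sub>R axis i 1)) = (*) (D (axis i 1))"
      using linear_cmul[OF has_derivative_linear[OF D]] by (auto simp: fun_eq_iff)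
    ultimately show ?thesis by (simp add: has_field_derivative_def)
  qed
  have "partial i g (x + t *\<^sub>R axis i 1) = D (axis i 1)"
    unfolding partial_def by (rule DERIV_imp_deriv) (rule line, simp)
  with line[of x t] show ?thesis by simp
qed

lemma partial_partial_le_at_min_diff:
  fixes u \<phi> :: "real^'n::finite \<Rightarrow> real"
  assumes "open S" "x0 \<in> S"
    and min: "\<And>y. y \<in> S \<Longrightarrow> u x0 - \<phi> x0 \<le> u y - \<phi> y"
    and u: "\<And>y. y \<in> S \<Longrightarrow> u differentiable (at y)"
    and \<phi>: "\<And>y. y \<in> S \<Longrightarrow> \<phi> differentiable (at y)"
    and "partial i u differentiable (at x0)" "partial i \<phi> differentiable (at x0)"
  shows "partial i (partial i \<phi>) x0 \<le> partial i (partial i u) x0"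
proof -
  obtain e where "e > 0" and "ball x0 e \<subseteq> S"
    using assms(1,2) by (auto simp: open_contains_ball)
  then have line: "x0 + t *\<^sub>R axis i 1 \<in> S" if "\<bar>t\<bar> < e" for t
    using that by (auto simp: dist_norm)
  define g where "g t = u (x0 + t *\<^sub>R axis i 1) - \<phi> (x0 + t *\<^sub>R axis i 1)" for t
  define g' where "g' t = partial i u (x0 + t *\<^sub>R axis i 1) - partial i \<phi> (x0 + t *\<^sub>R axis i 1)" for t
  have "(g has_real_derivative g' t) (at t)" if "\<bar>t\<bar> < e" for t
    unfolding g_def g'_def using line[OF that]
    by (intro DERIV_diff has_real_derivative_along_axis u \<phi>)
  moreover have "(g' has_real_derivative partial i (partial i u) x0 - partial i (partial i \<phi>) x0) (at 0)"
    unfolding g'_def using has_real_derivative_along_axis[of _ x0 0 i] assms(6,7)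
    by (intro DERIV_diff) auto
  moreover have "g 0 \<le> g t" if "\<bar>t\<bar> < e" for t
    using min[OF line[OF that]] by (simp add: g_def)
  ultimately have "0 \<le> partial i (partial i u) x0 - partial i (partial i \<phi>) x0"
    by (rule local_min_second_deriv_nonneg[OF \<open>e > 0\<close>])
  then show ?thesis by simp
qed

lemma laplacian_le_at_min_diff:
  fixes u \<phi> :: "real^'n::finite \<Rightarrow> real"
  assumes "open S" "x0 \<in> S"
    and "\<And>y. y \<in> S \<Longrightarrow> u x0 - \<phi> x0 \<le> u y - \<phi> y"
    and "\<And>y. y \<in> S \<Longrightarrow> u differentiable (at y)"
    and "\<And>y. y \<in> S \<Longrightarrow> \<phi> differentiable (at y)"
    and "\<And>i. partial i u differentiable (at x0)" "\<And>i. partial i \<phi> differentiable (at x0)"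
  shows "laplacian \<phi> x0 \<le> laplacian u x0"
  unfolding laplacian_def using partial_partial_le_at_min_diff[OF assms] by (rule sum_mono)

lemma differentiable_coordinate_fun:
  fixes h :: "real \<Rightarrow> real"
  assumes "(h has_real_derivative d) (at (x $ k))"
  shows "(\<lambda>y::real^'n::finite. h (y $ k)) differentiable (at x)"
proof -
  have "h differentiable (at (x $ k))"
    using assms unfolding differentiable_def has_field_derivative_def by blast
  then have "(h \<circ> (\<lambda>y. y $ k)) differentiable (at x)"
    using bounded_linear_imp_differentiable[OF bounded_linear_vec_nth] by (rule differentiable_chain_at[rotated])
  then show ?thesis by (simp add: o_def)
qed

lemma partial_coordinate_fun:
  fixes h h' :: "real \<Rightarrow> real"
  assumes "\<And>s. (h has_real_derivative h' s) (at s)"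
  shows "partial i (\<lambda>y::real^'n::finite. h (y $ k)) = (\<lambda>y. if i = k then h' (y $ k) else 0)"
proof
  fix y :: "real^'n"
  show "partial i (\<lambda>y. h (y $ k)) y = (if i = k then h' (y $ k) else 0)"
  proof (cases "i = k")
    case True
    have "((\<lambda>t. h (t + y $ k)) has_real_derivative h' (y $ k)) (at 0)"
      using assms DERIV_shift[of h "h' (y $ k)" 0 "y $ k"] by simp
    with True show ?thesis
      unfolding partial_def by (simp add: add.commute DERIV_imp_deriv)
  next
    case False
    then show ?thesis by (simp add: partial_def axis_def)
  qed
qed

lemma laplacian_coordinate_fun:
  fixes h h' h'' :: "real \<Rightarrow> real"
  assumes "\<And>s. (h has_real_derivative h' s) (at s)" "\<And>s. (h' has_real_derivative h'' s) (at s)"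
  shows "laplacian (\<lambda>y::real^'n::finite. h (y $ k)) x = h'' (x $ k)"
proof -
  have "partial i (partial i (\<lambda>y::real^'n. h (y $ k))) x = (if i = k then h'' (x $ k) else 0)" for i
    by (cases "i = k") (simp_all add: partial_coordinate_fun[OF assms(1)]
        partial_coordinate_fun[OF assms(2)] partial_def)
  then show ?thesis by (simp add: laplacian_def)
qed

lemma large_at_boundary_diff_bounded:
  assumes "large_at_boundary \<Omega> u" and "\<And>x. x \<in> \<Omega> \<Longrightarrow> g x \<le> B"
  shows "large_at_boundary \<Omega> (\<lambda>x. u x - g x)"
  unfolding large_at_boundary_def
proof
  fix M
  obtain \<delta> where "\<delta> > 0" and u: "\<And>x. x \<in> \<Omega> \<Longrightarrow> infdist x (frontier \<Omega>) < \<delta> \<Longrightarrow> u x > M + B"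
    using assms(1) unfolding large_at_boundary_def by meson
  have "u x - g x > M" if "x \<in> \<Omega>" "infdist x (frontier \<Omega>) < \<delta>" for x
    using u[OF that] assms(2)[OF that(1)] by linarith
  with \<open>\<delta> > 0\<close> show "\<exists>\<delta>>0. \<forall>x\<in>\<Omega>. infdist x (frontier \<Omega>) < \<delta> \<longrightarrow> u x - g x > M"
    by blast
qed

lemma large_at_boundary_attains_min:
  fixes w :: "real^'n::finite \<Rightarrow> real"
  assumes "open \<Omega>" "bounded \<Omega>" "x \<in> \<Omega>" "continuous_on \<Omega> w" "large_at_boundary \<Omega> w"
  obtains x0 where "x0 \<in> \<Omega>" "\<And>y. y \<in> \<Omega> \<Longrightarrow> w x0 \<le> w y"
proof -
  obtain \<delta> where "\<delta> > 0" and near: "\<And>y. y \<in> \<Omega> \<Longrightarrow> infdist y (frontier \<Omega>) < \<delta> \<Longrightarrow> w y > w x"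
    using assms(5) unfolding large_at_boundary_def by meson
  define S where "S = closure \<Omega> \<inter> {y. \<delta> \<le> infdist y (frontier \<Omega>)}"
  have "S \<subseteq> \<Omega>"
  proof
    fix y assume "y \<in> S"
    then have "y \<in> closure \<Omega>" "y \<notin> frontier \<Omega>"
      using \<open>\<delta> > 0\<close> by (auto simp: S_def)
    with \<open>open \<Omega>\<close> show "y \<in> \<Omega>" by (simp add: frontier_def interior_open)
  qed
  have "closed {y. \<delta> \<le> infdist y (frontier \<Omega>)}"
    by (intro closed_Collect_le continuous_on_const continuous_on_infdist continuous_on_id)
  then have "compact S"
    unfolding S_def using \<open>bounded \<Omega>\<close> compact_closure by (blast intro: compact_Int_closed)
  have "x \<in> S"
  proof -
    have "\<not> infdist x (frontier \<Omega>) < \<delta>" using near[OF \<open>x \<in> \<Omega>\<close>] by auto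
    with \<open>x \<in> \<Omega>\<close> closure_subset show ?thesis unfolding S_def by auto
  qed
  have "continuous_on S w"
    using assms(4) \<open>S \<subseteq> \<Omega>\<close> by (rule continuous_on_subset)
  then obtain x0 where "x0 \<in> S" and x0: "\<And>y. y \<in> S \<Longrightarrow> w x0 \<le> w y"
    using continuous_attains_inf[OF \<open>compact S\<close>] \<open>x \<in> S\<close> by blast
  have "w x0 \<le> w y" if "y \<in> \<Omega>" for y
  proof (cases "infdist y (frontier \<Omega>) < \<delta>")
    case True
    with near[OF that] x0[OF \<open>x \<in> S\<close>] show ?thesis by simp
  next
    case False
    with x0[of y] that closure_subset show ?thesis by (auto simp: S_def)
  qed
  with \<open>x0 \<in> S\<close> \<open>S \<subseteq> \<Omega>\<close> that show ?thesis by blast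
qed

lemma large_subsolution_ge_exponential:
  fixes u :: "real^'n::finite \<Rightarrow> real"
  assumes "open \<Omega>" "bounded \<Omega>"
    and u: "\<And>x. x \<in> \<Omega> \<Longrightarrow> u differentiable (at x)"
    and u': "\<And>i x. x \<in> \<Omega> \<Longrightarrow> partial i u differentiable (at x)"
    and "large_at_boundary \<Omega> u"
    and sub: "\<And>x. x \<in> \<Omega> \<Longrightarrow> laplacian u x \<le> K * u x + C"
    and "K > 0" "a \<ge> 0" "x \<in> \<Omega>"
  shows "a * exp (sqrt K * x $ k) - C / K \<le> u x"
proof -
  define c where "c = sqrt K"
  have "c * c = K" using \<open>K > 0\<close> by (simp add: c_def)
  define h where "h s = a * exp (c * s)" for s
  define h' where "h' s = a * c * exp (c * s)" for s
  have h: "(h has_real_derivative h' s) (at s)" and h': "(h' has_real_derivative K * h s) (at s)" for s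
    unfolding h_def h'_def using \<open>c * c = K\<close> by (auto intro!: derivative_eq_intros)
  define \<psi> where "\<psi> = (\<lambda>y::real^'n. h (y $ k))"
  have \<psi>: "\<psi> differentiable (at y)" for y
    unfolding \<psi>_def using h by (rule differentiable_coordinate_fun)
  have \<psi>': "partial i \<psi> differentiable (at y)" for i y
    using differentiable_coordinate_fun[OF h'] unfolding \<psi>_def partial_coordinate_fun[OF h]
    by (cases "i = k") simp_all
  have lap_\<psi>: "laplacian \<psi> y = K * \<psi> y" for y
    unfolding \<psi>_def by (rule laplacian_coordinate_fun[OF h h'])
  obtain R where R: "\<And>y. y \<in> \<Omega> \<Longrightarrow> norm y \<le> R"
    using \<open>bounded \<Omega>\<close> by (auto simp: bounded_iff)
  have "\<psi> y \<le> a * exp (c * R)" if "y \<in> \<Omega>" for y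
  proof -
    have "y $ k \<le> R" using R[OF that] component_le_norm_cart[of y k] by linarith
    then show ?thesis
      using \<open>a \<ge> 0\<close> \<open>K > 0\<close> by (auto simp: \<psi>_def h_def c_def intro!: mult_left_mono)
  qed
  then have large: "large_at_boundary \<Omega> (\<lambda>y. u y - \<psi> y)"
    by (rule large_at_boundary_diff_bounded[OF \<open>large_at_boundary \<Omega> u\<close>])
  have "(\<lambda>y. u y - \<psi> y) differentiable_on \<Omega>"
    using u \<psi> by (intro differentiable_at_imp_differentiable_on differentiable_diff)
  then obtain x0 where "x0 \<in> \<Omega>" and min: "\<And>y. y \<in> \<Omega> \<Longrightarrow> u x0 - \<psi> x0 \<le> u y - \<psi> y"
    using large_at_boundary_attains_min[OF \<open>open \<Omega>\<close> \<open>bounded \<Omega>\<close> \<open>x \<in> \<Omega>\<close>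
        differentiable_imp_continuous_on large] by blast
  have "K * \<psi> x0 \<le> K * u x0 + C"
    using laplacian_le_at_min_diff[OF \<open>open \<Omega>\<close> \<open>x0 \<in> \<Omega>\<close> min u \<psi> u'[OF \<open>x0 \<in> \<Omega>\<close>] \<psi>']
      sub[OF \<open>x0 \<in> \<Omega>\<close>] by (simp add: lap_\<psi>)
  then have "- C / K \<le> u x0 - \<psi> x0"
    using \<open>K > 0\<close> by (simp add: field_simps)
  also have "\<dots> \<le> u x - \<psi> x" using min[OF \<open>x \<in> \<Omega>\<close>] .
  finally show ?thesis by (simp add: \<psi>_def h_def c_def)
qed

lemma no_large_subsolution:
  fixes u :: "real^'n::finite \<Rightarrow> real"
  assumes "open \<Omega>" "bounded \<Omega>" "\<Omega> \<noteq> {}"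
    and "\<And>x. x \<in> \<Omega> \<Longrightarrow> u differentiable (at x)"
    and "\<And>i x. x \<in> \<Omega> \<Longrightarrow> partial i u differentiable (at x)"
    and "\<And>x. x \<in> \<Omega> \<Longrightarrow> laplacian u x \<le> K * u x + C"
    and "K > 0"
  shows "\<not> large_at_boundary \<Omega> u"
proof
  assume "large_at_boundary \<Omega> u"
  obtain x where "x \<in> \<Omega>" using \<open>\<Omega> \<noteq> {}\<close> by blast
  fix k :: 'n
  define e where "e = exp (sqrt K * x $ k)"
  define a where "a = (\<bar>u x + C / K\<bar> + 1) / e"
  have "e > 0" by (simp add: e_def)
  then have "a \<ge> 0" by (simp add: a_def)
  then have "a * e - C / K \<le> u x"
    using large_subsolution_ge_exponential[OF assms(1,2,4,5) \<open>large_at_boundary \<Omega> u\<close> assms(6,7) _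
        \<open>x \<in> \<Omega>\<close>] by (simp add: e_def)
  with \<open>e > 0\<close> show False by (simp add: a_def)
qed

lemma mono_on_sublinear_affine_bound:
  fixes f :: "real \<Rightarrow> real"
  assumes "mono_on {0..} f" and "bdd_above ((\<lambda>s. f s / s) ` {1..})"
  obtains L B where "L \<ge> 0" and "\<And>s. 0 \<le> s \<Longrightarrow> f s \<le> L * s + B"
proof -
  obtain L where L: "\<And>s. 1 \<le> s \<Longrightarrow> f s / s \<le> L"
    using assms(2) by (auto simp: bdd_above_def)
  have "f s \<le> max L 0 * s + \<bar>f 1\<bar>" if "0 \<le> s" for s
  proof (cases "1 \<le> s")
    case True
    then have "f s \<le> L * s" using L[OF True] by (simp add: divide_le_eq)
    also have "\<dots> \<le> max L 0 * s" using True by (intro mult_right_mono) auto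
    finally show ?thesis by linarith
  next
    case False
    then have "f s \<le> f 1" using that by (intro mono_onD[OF assms(1)]) auto
    moreover have "0 \<le> max L 0 * s" using that by simp
    ultimately show ?thesis by linarith
  qed
  with that[of "max L 0" "\<bar>f 1\<bar>"] show thesis by simp
qed

lemma laplacian_le_affine_of_equation:
  fixes u p :: "real^'n::finite \<Rightarrow> real"
  assumes "continuous_on (closure \<Omega>) p" "bounded \<Omega>"
    and f_nonneg: "\<forall>s\<ge>0. f s \<ge> 0" and "mono_on {0..} f" "bdd_above ((\<lambda>s. f s / s) ` {1..})"
    and u_pos: "\<forall>x\<in>\<Omega>. u x > 0"
    and eq: "\<forall>x\<in>\<Omega>. laplacian u x + norm (grad u x) = p x * f (u x)"
  obtains K C where "K > 0" and "\<And>x. x \<in> \<Omega> \<Longrightarrow> laplacian u x \<le> K * u x + C"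
proof -
  obtain L B where "L \<ge> 0" and f_le: "\<And>s. 0 \<le> s \<Longrightarrow> f s \<le> L * s + B"
    using mono_on_sublinear_affine_bound[OF assms(4,5)] by blast
  have "compact (p ` closure \<Omega>)"
    using assms(1,2) by (intro compact_continuous_image) (simp_all add: compact_closure)
  then obtain P where "P > 0" and P: "\<And>x. x \<in> closure \<Omega> \<Longrightarrow> \<bar>p x\<bar> \<le> P"
    by (auto dest!: compact_imp_bounded simp: bounded_pos)
  have bound: "laplacian u x \<le> (P * L + 1) * u x + P * B" if "x \<in> \<Omega>" for x
  proof -
    have "0 < u x" using u_pos that by blast
    have "laplacian u x \<le> p x * f (u x)"
      using eq[rule_format, OF that] norm_ge_zero[of "grad u x"] by linarith
    also have "\<dots> \<le> P * f (u x)"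
      using abs_le_D1[OF P] closure_subset[of \<Omega>] that f_nonneg \<open>0 < u x\<close>
      by (intro mult_right_mono) auto
    also have "\<dots> \<le> P * (L * u x + B)"
      using f_le \<open>0 < u x\<close> \<open>P > 0\<close> by (intro mult_left_mono) auto
    also have "\<dots> \<le> (P * L + 1) * u x + P * B"
      using \<open>0 < u x\<close> by (simp add: algebra_simps)
    finally show ?thesis .
  qed
  have "0 < P * L + 1"
    using \<open>P > 0\<close> \<open>L \<ge> 0\<close> by (simp add: add_nonneg_pos)
  then show thesis using bound by (rule that)
qed

theorem theorem1:
  fixes \<Omega> :: "(real^'n::finite) set"
    and p :: "real^'n \<Rightarrow> real"
    and f :: "real \<Rightarrow> real"
    and \<alpha> :: real
  assumes "CARD('n) \<ge> 3"
    and "smooth_bounded_domain \<Omega>"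
    and "0 < \<alpha>" "\<alpha> < 1"
    and "continuous_on (closure \<Omega>) p" "holder_on \<alpha> (closure \<Omega>) p"
    and "\<forall>x\<in>closure \<Omega>. p x \<ge> 0"
    and "\<forall>s\<ge>0. f s \<ge> 0"
    and "mono_on {0..} f"
    and "loc_holder_nonneg \<alpha> f"
    and "f 0 = 0"
    and "\<forall>s>0. f s > 0"
    and "bdd_above ((\<lambda>s. f s / s) ` {1..})"
  shows "\<not> (\<exists>u. C2_on \<Omega> u \<and> (\<forall>x\<in>\<Omega>. u x > 0) \<and>
             (\<forall>x\<in>\<Omega>. laplacian u x + norm (grad u x) = p x * f (u x)) \<and>
             large_at_boundary \<Omega> u)"
proof (intro notI, elim exE conjE)
  fix u assume u: "C2_on \<Omega> u" and u_pos: "\<forall>x\<in>\<Omega>. u x > 0"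
    and eq: "\<forall>x\<in>\<Omega>. laplacian u x + norm (grad u x) = p x * f (u x)"
    and large: "large_at_boundary \<Omega> u"
  have \<Omega>: "open \<Omega>" "bounded \<Omega>" "\<Omega> \<noteq> {}"
    using assms(2) by (auto simp: smooth_bounded_domain_def)
  obtain K C where "K > 0" and "\<And>x. x \<in> \<Omega> \<Longrightarrow> laplacian u x \<le> K * u x + C"
    using laplacian_le_affine_of_equation[OF assms(5) \<Omega>(2) assms(8,9,13) u_pos eq] by blast
  with u have "\<not> large_at_boundary \<Omega> u"
    by (intro no_large_subsolution[OF \<Omega>]) (auto simp: C2_on_def)
  with large show False by simp
qed

end
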